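(* (1) Soundness: if $\Phi\vdash_I\rho\sqsubseteq\tau$ holds for template types $\rho,\tau$, then $\rho\xi\sqsubseteq_J\tau\xi$ for every model $(J,\xi)$ of $\Phi$. (2) Completeness: if $\rho\xi\sqsubseteq_J\tau\xi$ holds for template types $\rho,\tau$ and a second-order substitution $\xi$, then $\Phi\vdash_I\rho\sqsubseteq\tau$ is derivable for some SOCP $\Phi$, and there exists an extension $\xi'$ of $\xi$, whose domain coincides with the second-order variables occurring in the derivation of $\Phi\vdash_I\rho\sqsubseteq\tau$, such that $(J,\xi')$ is a model of $\Phi$.
   Context: Second-order index terms $a::=i\mid\alpha\mid g(a_1,\dots,a_k)$ over index variables $i$, second-order index variables $\alpha$ and index symbols $g$ (including $0,\mathsf s,+$). An interpretation $J$ maps $k$-ary symbols to total weakly monotone functions $\mathbb N^k\to\mathbb N$ ($0,\mathsf s,+$ standard); $a\le_J b$ iff $[a]^\beta_J\le[b]^\beta_J$ for all assignments $\beta$ (for index terms without second-order variables). An SOCP is a set of inequalities $a\le b$ and occurrence constraints $i\notin\alpha$; a second-order substitution $\xi$ maps second-order variables to index terms without second-order variables; $(J,\xi)$ is a model of $\Phi$ if $a\xi\le_J b\xi$ for all inequalities and $i\notin\mathrm{Var}(\xi(\alpha))$ for all occurrence constraints. Sized types: monotypes $\rho::=B^a\mid\rho_1\times\rho_2\mid\sigma\to\rho$; polytypes $\forall\vec i.\,\sigma\to\rho$; types $\sigma::=\rho\mid$ polytype; a monotype is identified with $\forall\cdot.\rho$; types up to $\alpha$-equivalence; a template type is one whose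 indices may contain second-order variables. $\mathrm{FV}(\sigma)$ is the set of free index variables. Instantiation $\forall\vec i.\tau\sqsupseteq\rho$ iff $\rho=\tau\{\vec i:=\vec a\}$. Subtyping $\sqsubseteq_J$: $B^a\sqsubseteq_J B^b$ if $a\le_J b$; componentwise on products; $\sigma_1\to\rho_1\sqsubseteq_J\sigma_2\to\rho_2$ if $\sigma_2\sqsubseteq_J\sigma_1$ and $\rho_1\sqsubseteq_J\rho_2$; $\forall\vec i.\rho_1\sqsubseteq_J\sigma_2$ if $\sigma_2\sqsupseteq\rho_2$, $\rho_1\sqsubseteq_J\rho_2$, $\vec i\cap\mathrm{FV}(\sigma_2)=\emptyset$. Subtyping inference $\Phi\vdash_I\sigma\sqsubseteq\tau$: $\{a\le b\}\vdash_I B^a\sqsubseteq B^b$; from $\Phi_1\vdash_I\rho_1\sqsubseteq\rho_3$ and $\Phi_2\vdash_I\rho_2\sqsubseteq\rho_4$ infer $\Phi_1\cup\Phi_2\vdash_I\rho_1\times\rho_2\sqsubseteq\rho_3\times\rho_4$; from $\Phi_1\vdash_I\sigma_2\sqsubseteq\sigma_1$ and $\Phi_2\vdash_I\rho_1\sqsubseteq\rho_2$ infer $\Phi_1\cup\Phi_2\vdash_I\sigma_1\to\rho_1\sqsubseteq\sigma_2\to\rho_2$; for fresh second-order variables $\vec\alpha$, from $\Phi\vdash_I\rho_1\sqsubseteq\rho_2\{\vec j:=\vec\alpha\}$ and $\vec i\cap\mathrm{FV}(\forall\vec j.\rho_2)=\emptyset$ infer $\Phi\cup\{\vec i\notin\rho_1\}\cup\{\vec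 i\notin\rho_2\}\vdash_I\forall\vec i.\rho_1\sqsubseteq\forall\vec j.\rho_2$. Here, for index variables $\vec i$ and template types $\vec\rho$, $\vec i\notin\vec\rho$ denotes the set of occurrence constraints $i_k\notin\alpha$ for all $i_k$ in $\vec i$ and all second-order variables $\alpha$ occurring in some $\rho_l$. *)

theory Defs
  imports Main
begin

text \<open>Index variables i (free, named by nat), second-order index variables alpha (SV),
  bound index variables (de Bruijn, BV; only used for variables bound by a polytype
  quantifier, so that types are automatically identified up to alpha-equivalence),
  the standard symbols 0, s, + and further index symbols g applied to argument lists.\<close>

datatype itm = IV nat | SV nat | BV nat | Z | S itm | Pl itm itm | G string "itm list"

fun fv_i :: "itm \<Rightarrow> nat set" where
  "fv_i (IV i) = {i}"
| "fv_i (SV a) = {}"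
| "fv_i (BV n) = {}"
| "fv_i Z = {}"
| "fv_i (S a) = fv_i a"
| "fv_i (Pl a b) = fv_i a \<union> fv_i b"
| "fv_i (G g as) = (\<Union>a\<in>set as. fv_i a)"

fun sov_i :: "itm \<Rightarrow> nat set" where
  "sov_i (IV i) = {}"
| "sov_i (SV a) = {a}"
| "sov_i (BV n) = {}"
| "sov_i Z = {}"
| "sov_i (S a) = sov_i a"
| "sov_i (Pl a b) = sov_i a \<union> sov_i b"
| "sov_i (G g as) = (\<Union>a\<in>set as. sov_i a)"

fun lc_i :: "nat \<Rightarrow> itm \<Rightarrow> bool" where
  "lc_i d (BV n) = (n < d)"
| "lc_i d (S a) = lc_i d a"
| "lc_i d (Pl a b) = (lc_i d a \<and> lc_i d b)"
| "lc_i d (G g as) = (\<forall>a\<in>set as. lc_i d a)"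
| "lc_i d _ = True"

definition ground_i :: "itm \<Rightarrow> bool" where
  "ground_i a \<longleftrightarrow> sov_i a = {} \<and> lc_i 0 a"

fun opn_i :: "nat \<Rightarrow> itm list \<Rightarrow> itm \<Rightarrow> itm" where
  "opn_i d ts (BV n) =
     (if n < d then BV n
      else if n < d + length ts then ts ! (n - d)
      else BV (n - length ts))"
| "opn_i d ts (S a) = S (opn_i d ts a)"
| "opn_i d ts (Pl a b) = Pl (opn_i d ts a) (opn_i d ts b)"
| "opn_i d ts (G g as) = G g (map (opn_i d ts) as)"
| "opn_i d ts a = a"

fun subst_i :: "(nat \<rightharpoonup> itm) \<Rightarrow> itm \<Rightarrow> itm" where
  "subst_i \<xi> (SV a) = (case \<xi> a of Some t \<Rightarrow> t | None \<Rightarrow> SV a)"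
| "subst_i \<xi> (S a) = S (subst_i \<xi> a)"
| "subst_i \<xi> (Pl a b) = Pl (subst_i \<xi> a) (subst_i \<xi> b)"
| "subst_i \<xi> (G g as) = G g (map (subst_i \<xi>) as)"
| "subst_i \<xi> a = a"

definition so_subst :: "(nat \<rightharpoonup> itm) \<Rightarrow> bool" where
  "so_subst \<xi> \<longleftrightarrow> (\<forall>a t. \<xi> a = Some t \<longrightarrow> ground_i t)"

type_synonym interp = "string \<Rightarrow> nat list \<Rightarrow> nat"

text \<open>Each symbol g of arity k is interpreted by the function J g restricted to lists of
  length k; it must be weakly monotone.\<close>
definition is_interp :: "interp \<Rightarrow> bool" where
  "is_interp J \<longleftrightarrow> (\<forall>g xs ys. list_all2 (\<le>) xs ys \<longrightarrow> J g xs \<le> J g ys)"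

fun eval_i :: "interp \<Rightarrow> (nat \<Rightarrow> nat) \<Rightarrow> itm \<Rightarrow> nat" where
  "eval_i J \<beta> (IV i) = \<beta> i"
| "eval_i J \<beta> (SV a) = 0"
| "eval_i J \<beta> (BV n) = 0"
| "eval_i J \<beta> Z = 0"
| "eval_i J \<beta> (S a) = Suc (eval_i J \<beta> a)"
| "eval_i J \<beta> (Pl a b) = eval_i J \<beta> a + eval_i J \<beta> b"
| "eval_i J \<beta> (G g as) = J g (map (eval_i J \<beta>) as)"

definition le_J :: "interp \<Rightarrow> itm \<Rightarrow> itm \<Rightarrow> bool" where
  "le_J J a b \<longleftrightarrow> (\<forall>\<beta>. eval_i J \<beta> a \<le> eval_i J \<beta> b)"

text \<open>All k rho binds k index variables (de Bruijn BV 0 .. BV (k-1) in rho).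
  A monotype rho is identified with All 0 rho, i.e. well-formed types never contain All 0.\<close>
datatype ty = Base string itm | Prod ty ty | Arr ty ty | All nat ty

fun mono_wf :: "nat \<Rightarrow> ty \<Rightarrow> bool" and sig_wf :: "nat \<Rightarrow> ty \<Rightarrow> bool" where
  "mono_wf d (Base B a) = lc_i d a"
| "mono_wf d (Prod r1 r2) = (mono_wf d r1 \<and> mono_wf d r2)"
| "mono_wf d (Arr s r) = (sig_wf d s \<and> mono_wf d r)"
| "mono_wf d (All k r) = False"
| "sig_wf d (All k r) = (0 < k \<and> (\<exists>s r'. r = Arr s r') \<and> mono_wf (d + k) r)"
| "sig_wf d (Base B a) = mono_wf d (Base B a)"
| "sig_wf d (Prod r1 r2) = mono_wf d (Prod r1 r2)"
| "sig_wf d (Arr s r) = mono_wf d (Arr s r)"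

definition is_type :: "ty \<Rightarrow> bool" where
  "is_type \<sigma> \<longleftrightarrow> sig_wf 0 \<sigma>"

fun fv_t :: "ty \<Rightarrow> nat set" where
  "fv_t (Base B a) = fv_i a"
| "fv_t (Prod r1 r2) = fv_t r1 \<union> fv_t r2"
| "fv_t (Arr s r) = fv_t s \<union> fv_t r"
| "fv_t (All k r) = fv_t r"

fun sov_t :: "ty \<Rightarrow> nat set" where
  "sov_t (Base B a) = sov_i a"
| "sov_t (Prod r1 r2) = sov_t r1 \<union> sov_t r2"
| "sov_t (Arr s r) = sov_t s \<union> sov_t r"
| "sov_t (All k r) = sov_t r"

fun opn_t :: "nat \<Rightarrow> itm list \<Rightarrow> ty \<Rightarrow> ty" where
  "opn_t d ts (Base B a) = Base B (opn_i d ts a)"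
| "opn_t d ts (Prod r1 r2) = Prod (opn_t d ts r1) (opn_t d ts r2)"
| "opn_t d ts (Arr s r) = Arr (opn_t d ts s) (opn_t d ts r)"
| "opn_t d ts (All k r) = All k (opn_t (d + k) ts r)"

fun subst_t :: "(nat \<rightharpoonup> itm) \<Rightarrow> ty \<Rightarrow> ty" where
  "subst_t \<xi> (Base B a) = Base B (subst_i \<xi> a)"
| "subst_t \<xi> (Prod r1 r2) = Prod (subst_t \<xi> r1) (subst_t \<xi> r2)"
| "subst_t \<xi> (Arr s r) = Arr (subst_t \<xi> s) (subst_t \<xi> r)"
| "subst_t \<xi> (All k r) = All k (subst_t \<xi> r)"

fun nbind :: "ty \<Rightarrow> nat" where
  "nbind (All k r) = k"
| "nbind _ = 0"

fun body :: "ty \<Rightarrow> ty" where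
  "body (All k r) = r"
| "body r = r"

definition inst :: "ty \<Rightarrow> itm list \<Rightarrow> ty" where
  "inst \<sigma> bs = opn_t 0 bs (body \<sigma>)"

inductive subty :: "interp \<Rightarrow> ty \<Rightarrow> ty \<Rightarrow> bool" for J where
  sub_base: "le_J J a b \<Longrightarrow> subty J (Base B a) (Base B b)"
| sub_prod: "subty J r1 r3 \<Longrightarrow> subty J r2 r4 \<Longrightarrow> subty J (Prod r1 r2) (Prod r3 r4)"
| sub_arr: "subty J s2 s1 \<Longrightarrow> subty J r1 r2 \<Longrightarrow> subty J (Arr s1 r1) (Arr s2 r2)"
| sub_all: "\<lbrakk> distinct is; length is = nbind s1; set is \<inter> (fv_t s1 \<union> fv_t s2) = {};
             length bs = nbind s2; \<forall>b\<in>set bs. ground_i b;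
             subty J (inst s1 (map IV is)) (inst s2 bs) \<rbrakk>
           \<Longrightarrow> subty J s1 s2"

datatype constr = Ineq itm itm | NotIn nat nat  (* NotIn i alpha:  i \<notin> alpha *)

definition is_model :: "interp \<Rightarrow> (nat \<rightharpoonup> itm) \<Rightarrow> constr set \<Rightarrow> bool" where
  "is_model J \<xi> \<Phi> \<longleftrightarrow>
     (\<forall>a b. Ineq a b \<in> \<Phi> \<longrightarrow> sov_i a \<union> sov_i b \<subseteq> dom \<xi> \<and> le_J J (subst_i \<xi> a) (subst_i \<xi> b))
   \<and> (\<forall>i \<alpha>. NotIn i \<alpha> \<in> \<Phi> \<longrightarrow> \<alpha> \<in> dom \<xi> \<and> i \<notin> fv_i (the (\<xi> \<alpha>)))"

text \<open>infer Phi V s t:  Phi |-_I s <= t  is derivable by a derivation whose set of occurring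
  second-order variables is V.  Freshness of the second-order variables introduced by the
  forall rule is global: distinct subderivations share only second-order variables that
  occur in the types of both.\<close>
inductive infer :: "constr set \<Rightarrow> nat set \<Rightarrow> ty \<Rightarrow> ty \<Rightarrow> bool" where
  inf_base: "infer {Ineq a b} (sov_i a \<union> sov_i b) (Base B a) (Base B b)"
| inf_prod: "\<lbrakk> infer \<Phi>1 V1 r1 r3; infer \<Phi>2 V2 r2 r4;
              V1 \<inter> V2 \<subseteq> (sov_t r1 \<union> sov_t r3) \<inter> (sov_t r2 \<union> sov_t r4) \<rbrakk>
           \<Longrightarrow> infer (\<Phi>1 \<union> \<Phi>2) (V1 \<union> V2) (Prod r1 r2) (Prod r3 r4)"
| inf_arr: "\<lbrakk> infer \<Phi>1 V1 s2 s1; infer \<Phi>2 V2 r1 r2;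
              V1 \<inter> V2 \<subseteq> (sov_t s2 \<union> sov_t s1) \<inter> (sov_t r1 \<union> sov_t r2) \<rbrakk>
           \<Longrightarrow> infer (\<Phi>1 \<union> \<Phi>2) (V1 \<union> V2) (Arr s1 r1) (Arr s2 r2)"
| inf_all: "\<lbrakk> infer \<Phi> V (inst s1 (map IV is)) (inst s2 (map SV as));
              distinct is; length is = nbind s1; set is \<inter> (fv_t s1 \<union> fv_t s2) = {};
              distinct as; length as = nbind s2; set as \<inter> (sov_t s1 \<union> sov_t s2) = {};
              set as \<inter> V \<subseteq> sov_t (inst s2 (map SV as)) \<rbrakk>
           \<Longrightarrow> infer (\<Phi> \<union> {NotIn i \<alpha> | i \<alpha>. i \<in> set is \<and> \<alpha> \<in> sov_t s1 \<union> sov_t s2})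
                     (V \<union> set as) s1 s2"

end

theory Submission
  imports Defs
begin

(*
  Soundness is an induction on the inference derivation. In the quantifier rule the fresh
  second-order variables are instantiated by their values under the model (padded with 0 where
  the model leaves them undefined), which yields the instance required by subtyping; the
  occurrence constraints guarantee that the eigenvariables stay fresh for the substituted types.

  Completeness is an induction on the subtyping derivation, reading off the index terms of the
  inference rules from the template types. In the quantifier rule the instance is matched by
  fresh second-order variables mapped to the instantiating terms. Since the inference rules
  require sibling derivations to share only second-order variables of their types, the induction
  carries a finite set of variables that the newly introduced ones must avoid.
*)

section \<open>Opening and second-order substitution\<close>

lemma opn_i_lc: "lc_i k t \<Longrightarrow> k \<le> d \<Longrightarrow> opn_i d ts t = t"
  by (induction t) (auto intro: map_idI)

lemma opn_i_ground: "ground_i t \<Longrightarrow> opn_i d ts t = t"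
  using opn_i_lc[of 0 t d ts] by (simp add: ground_i_def)

lemma subst_i_opn_i:
  "so_subst \<xi> \<Longrightarrow> subst_i \<xi> (opn_i d ts a) = opn_i d (map (subst_i \<xi>) ts) (subst_i \<xi> a)"
  by (induction a) (auto simp: so_subst_def opn_i_ground split: option.split)

lemma subst_t_opn_t:
  "so_subst \<xi> \<Longrightarrow> subst_t \<xi> (opn_t d ts s) = opn_t d (map (subst_i \<xi>) ts) (subst_t \<xi> s)"
  by (induction s arbitrary: d) (auto simp: subst_i_opn_i)

lemma nbind_subst_t [simp]: "nbind (subst_t \<xi> s) = nbind s"
  by (cases s) auto

lemma subst_t_inst:
  "so_subst \<xi> \<Longrightarrow> subst_t \<xi> (inst s ts) = inst (subst_t \<xi> s) (map (subst_i \<xi>) ts)"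
proof -
  have "body (subst_t \<xi> s) = subst_t \<xi> (body s)" by (cases s) auto
  then show "so_subst \<xi> \<Longrightarrow> ?thesis" by (simp add: inst_def subst_t_opn_t)
qed

lemma map_subst_i_IV [simp]: "map (subst_i \<xi>) (map IV is) = map IV is"
  by (induction "is") auto

lemma subst_i_cong: "(\<And>x. x \<in> sov_i a \<Longrightarrow> \<xi>1 x = \<xi>2 x) \<Longrightarrow> subst_i \<xi>1 a = subst_i \<xi>2 a"
  by (induction a) auto

lemma subst_t_cong: "(\<And>x. x \<in> sov_t s \<Longrightarrow> \<xi>1 x = \<xi>2 x) \<Longrightarrow> subst_t \<xi>1 s = subst_t \<xi>2 s"
  by (induction s) (auto intro: subst_i_cong)

lemma subst_t_restrict_map: "sov_t s \<subseteq> X \<Longrightarrow> subst_t (\<xi> |` X) s = subst_t \<xi> s"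
  by (rule subst_t_cong) auto

lemma finite_sov_i: "finite (sov_i a)"
  by (induction a) auto

lemma finite_sov_t: "finite (sov_t s)"
  by (induction s) (auto simp: finite_sov_i)

lemma fv_subst_i: "fv_i (subst_i \<xi> a) = fv_i a \<union> (\<Union>\<alpha>\<in>sov_i a \<inter> dom \<xi>. fv_i (the (\<xi> \<alpha>)))"
  by (induction a) (auto split: option.split)

lemma fv_subst_t: "fv_t (subst_t \<xi> s) = fv_t s \<union> (\<Union>\<alpha>\<in>sov_t s \<inter> dom \<xi>. fv_i (the (\<xi> \<alpha>)))"
  by (induction s) (auto simp: fv_subst_i)

lemma sov_opn_i: "sov_i a \<subseteq> sov_i (opn_i d ts a)" "sov_i (opn_i d ts a) \<subseteq> sov_i a \<union> \<Union>(sov_i ` set ts)"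
proof -
  show "sov_i a \<subseteq> sov_i (opn_i d ts a)" by (induction a) auto
  show "sov_i (opn_i d ts a) \<subseteq> sov_i a \<union> \<Union>(sov_i ` set ts)"
  proof (induction a)
    case (BV n)
    have "n - d < length ts" if "\<not> n < d" "n < d + length ts" using that by linarith
    then show ?case by (auto dest: nth_mem)
  qed fastforce+
qed

lemma sov_inst: "sov_t s \<subseteq> sov_t (inst s ts)" "sov_t (inst s ts) \<subseteq> sov_t s \<union> \<Union>(sov_i ` set ts)"
proof -
  have "sov_t r \<subseteq> sov_t (opn_t d ts r) \<and> sov_t (opn_t d ts r) \<subseteq> sov_t r \<union> \<Union>(sov_i ` set ts)" for d r
    by (induction r arbitrary: d) (use sov_opn_i in fastforce)+
  moreover have "sov_t (body s) = sov_t s" by (cases s) auto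
  ultimately show "sov_t s \<subseteq> sov_t (inst s ts)" "sov_t (inst s ts) \<subseteq> sov_t s \<union> \<Union>(sov_i ` set ts)"
    unfolding inst_def by blast+
qed

lemma sov_inst_IV [simp]: "sov_t (inst s (map IV is)) = sov_t s"
  using sov_inst[of s "map IV is"] by auto

lemma sov_inst_SV: "sov_t (inst s (map SV as)) \<subseteq> sov_t s \<union> set as"
  using sov_inst(2)[of s "map SV as"] by auto

section \<open>Models of constraint problems\<close>

lemma so_subst_restrict_map: "so_subst \<xi> \<Longrightarrow> so_subst (\<xi> |` X)"
  unfolding so_subst_def by (auto simp: restrict_map_def)

lemma so_subst_map_add: "so_subst \<xi>1 \<Longrightarrow> so_subst \<xi>2 \<Longrightarrow> so_subst (\<xi>1 ++ \<xi>2)"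
  unfolding so_subst_def map_add_def by (auto split: option.splits)

lemma so_subst_map_of_zip: "\<forall>b\<in>set bs. ground_i b \<Longrightarrow> so_subst (map_of (zip as bs))"
  unfolding so_subst_def by (auto dest: map_of_SomeD set_zip_rightD)

definition pad_zero :: "nat set \<Rightarrow> (nat \<rightharpoonup> itm) \<Rightarrow> (nat \<rightharpoonup> itm)" where
  "pad_zero X \<xi> = ((\<lambda>_. Some Z) |` X) ++ \<xi>"

lemma map_le_pad_zero: "\<xi> \<subseteq>\<^sub>m pad_zero X \<xi>"
  by (simp add: pad_zero_def)

lemma dom_pad_zero [simp]: "dom (pad_zero X \<xi>) = X \<union> dom \<xi>"
  by (auto simp: pad_zero_def)

lemma pad_zero_outside: "x \<notin> X \<Longrightarrow> pad_zero X \<xi> x = \<xi> x"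
  by (simp add: pad_zero_def map_add_def split: option.split)

lemma so_subst_pad_zero: "so_subst \<xi> \<Longrightarrow> so_subst (pad_zero X \<xi>)"
  unfolding pad_zero_def
  by (rule so_subst_map_add) (auto simp: so_subst_def ground_i_def restrict_map_def)

lemma is_model_Un: "is_model J \<xi> (\<Phi>1 \<union> \<Phi>2) \<longleftrightarrow> is_model J \<xi> \<Phi>1 \<and> is_model J \<xi> \<Phi>2"
  unfolding is_model_def by blast

lemma is_model_map_le:
  assumes "is_model J \<xi>1 \<Phi>" "\<xi>1 \<subseteq>\<^sub>m \<xi>2"
  shows "is_model J \<xi>2 \<Phi>"
proof -
  have agree: "\<xi>2 \<alpha> = \<xi>1 \<alpha>" if "\<alpha> \<in> dom \<xi>1" for \<alpha>
    using assms(2) that unfolding map_le_def by metis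
  have subst_agree: "subst_i \<xi>2 a = subst_i \<xi>1 a" if "sov_i a \<subseteq> dom \<xi>1" for a
    using that by (intro subst_i_cong) (auto intro: agree)
  note dom_le = map_le_implies_dom_le[OF assms(2)]
  show ?thesis
    unfolding is_model_def
  proof (rule conjI; intro allI impI)
    fix a b assume "Ineq a b \<in> \<Phi>"
    then have "sov_i a \<union> sov_i b \<subseteq> dom \<xi>1" "le_J J (subst_i \<xi>1 a) (subst_i \<xi>1 b)"
      using assms(1) unfolding is_model_def by blast+
    then show "sov_i a \<union> sov_i b \<subseteq> dom \<xi>2 \<and> le_J J (subst_i \<xi>2 a) (subst_i \<xi>2 b)"
      by (metis Un_subset_iff dom_le subset_trans subst_agree)
  next
    fix i \<alpha> assume "NotIn i \<alpha> \<in> \<Phi>"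
    then have "\<alpha> \<in> dom \<xi>1" "i \<notin> fv_i (the (\<xi>1 \<alpha>))"
      using assms(1) unfolding is_model_def by blast+
    then show "\<alpha> \<in> dom \<xi>2 \<and> i \<notin> fv_i (the (\<xi>2 \<alpha>))"
      using dom_le agree by auto
  qed
qed

lemma is_model_NotIn:
  assumes "X \<subseteq> dom \<xi>" "\<And>\<alpha>. \<alpha> \<in> X \<Longrightarrow> I \<inter> fv_i (the (\<xi> \<alpha>)) = {}"
  shows "is_model J \<xi> {NotIn i \<alpha> | i \<alpha>. i \<in> I \<and> \<alpha> \<in> X}"
  using assms unfolding is_model_def by blast

section \<open>Soundness and completeness\<close>

theorem infer_sound:
  assumes "infer \<Phi> V \<rho> \<tau>" "so_subst \<xi>" "is_model J \<xi> \<Phi>"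
  shows "subty J (subst_t \<xi> \<rho>) (subst_t \<xi> \<tau>)"
  using assms
proof (induction arbitrary: \<xi> rule: infer.induct)
  case (inf_base a b B)
  then show ?case by (auto simp: is_model_def intro: subty.sub_base)
next
  case (inf_prod \<Phi>1 V1 r1 r3 \<Phi>2 V2 r2 r4)
  then show ?case by (auto simp: is_model_Un intro: subty.sub_prod)
next
  case (inf_arr \<Phi>1 V1 s2 s1 \<Phi>2 V2 r1 r2)
  then show ?case by (auto simp: is_model_Un intro: subty.sub_arr)
next
  case (inf_all \<Phi> V s1 "is" s2 as)
  let ?\<xi>' = "pad_zero (set as) \<xi>"
  define bs where "bs = map (\<lambda>\<alpha>. the (?\<xi>' \<alpha>)) as"
  have ss': "so_subst ?\<xi>'" using inf_all.prems(1) by (rule so_subst_pad_zero)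
  have "subty J (subst_t ?\<xi>' (inst s1 (map IV is))) (subst_t ?\<xi>' (inst s2 (map SV as)))"
    using inf_all.IH[OF ss'] inf_all.prems(2) is_model_map_le map_le_pad_zero is_model_Un
    by blast
  moreover have "subst_t ?\<xi>' s = subst_t \<xi> s" if "s \<in> {s1, s2}" for s
    using that inf_all.hyps(7) by (intro subst_t_cong pad_zero_outside) blast
  moreover have "subst_i ?\<xi>' (SV \<alpha>) = the (?\<xi>' \<alpha>)" if "\<alpha> \<in> set as" for \<alpha>
    using that by (auto simp: pad_zero_def map_add_def split: option.split)
  then have "map (subst_i ?\<xi>') (map SV as) = bs"
    by (simp add: bs_def)
  ultimately have sub: "subty J (inst (subst_t \<xi> s1) (map IV is)) (inst (subst_t \<xi> s2) bs)"
    by (simp add: subst_t_inst[OF ss'] comp_def del: map_map)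
  have ground: "\<forall>b\<in>set bs. ground_i b"
    using ss' unfolding bs_def so_subst_def by (auto simp: pad_zero_def map_add_def split: option.split)
  have "i \<notin> fv_i (the (\<xi> \<alpha>))" if "i \<in> set is" "\<alpha> \<in> sov_t s1 \<union> sov_t s2" for i \<alpha>
    using inf_all.prems(2) that unfolding is_model_def by blast
  then have fresh: "set is \<inter> (fv_t (subst_t \<xi> s1) \<union> fv_t (subst_t \<xi> s2)) = {}"
    using inf_all.hyps(4) by (auto simp: fv_subst_t)
  show ?case
    using subty.sub_all[OF inf_all.hyps(2) _ fresh _ ground sub] inf_all.hyps(3,6)
    by (simp add: bs_def)
qed

lemma infer_finite: "infer \<Phi> V \<rho> \<tau> \<Longrightarrow> finite V"
  by (induction rule: infer.induct) (auto simp: finite_sov_i)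

lemma obtain_fresh_list:
  fixes F :: "nat set"
  assumes "finite F"
  obtains xs where "distinct xs" "length xs = n" "set xs \<inter> F = {}"
proof
  let ?m = "Suc (Max (insert 0 F))"
  have "\<forall>x\<in>F. x < ?m" using assms by (simp add: le_imp_less_Suc)
  then show "set [?m..<?m + n] \<inter> F = {}" by auto
qed simp_all

lemma map_add_join:
  assumes dom: "dom \<xi> = S1 \<union> S2" and le1: "\<xi> |` S1 \<subseteq>\<^sub>m \<xi>1" and le2: "\<xi> |` S2 \<subseteq>\<^sub>m \<xi>2"
    and overlap: "dom \<xi>1 \<inter> dom \<xi>2 \<subseteq> S1 \<inter> S2"
  shows "\<xi> \<subseteq>\<^sub>m \<xi>1 ++ \<xi>2" "\<xi>1 \<subseteq>\<^sub>m \<xi>1 ++ \<xi>2"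
proof -
  have agree1: "\<xi>1 x = \<xi> x" "x \<in> dom \<xi>1" if "x \<in> S1" for x
  proof -
    have "x \<in> dom (\<xi> |` S1)" using that dom by auto
    then have "\<xi>1 x = \<xi> x" using le1 that unfolding map_le_def by auto
    moreover have "x \<in> dom \<xi>" using that dom by auto
    ultimately show "\<xi>1 x = \<xi> x" "x \<in> dom \<xi>1" by (auto simp: dom_def)
  qed
  have agree2: "\<xi>2 x = \<xi> x" "x \<in> dom \<xi>2" if "x \<in> S2" for x
  proof -
    have "x \<in> dom (\<xi> |` S2)" using that dom by auto
    then have "\<xi>2 x = \<xi> x" using le2 that unfolding map_le_def by auto
    moreover have "x \<in> dom \<xi>" using that dom by auto
    ultimately show "\<xi>2 x = \<xi> x" "x \<in> dom \<xi>2" by (auto simp: dom_def)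
  qed
  show "\<xi> \<subseteq>\<^sub>m \<xi>1 ++ \<xi>2"
    unfolding map_le_def
  proof
    fix x assume x: "x \<in> dom \<xi>"
    show "\<xi> x = (\<xi>1 ++ \<xi>2) x"
    proof (cases "x \<in> dom \<xi>2")
      case True
      then have "x \<in> S2" using x dom agree1(2) overlap by blast
      with True show ?thesis by (simp add: map_add_dom_app_simps agree2)
    next
      case False
      then have "x \<in> S1" using x dom agree2(2) by blast
      with False show ?thesis by (simp add: map_add_dom_app_simps agree1)
    qed
  qed
  show "\<xi>1 \<subseteq>\<^sub>m \<xi>1 ++ \<xi>2"
    unfolding map_le_def
  proof
    fix x assume x: "x \<in> dom \<xi>1"
    show "\<xi>1 x = (\<xi>1 ++ \<xi>2) x"
    proof (cases "x \<in> dom \<xi>2")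
      case True
      then have "x \<in> S1 \<inter> S2" using x overlap by blast
      with True show ?thesis by (simp add: map_add_dom_app_simps agree1 agree2)
    qed (simp add: map_add_dom_app_simps)
  qed
qed

definition derivable_avoiding :: "interp \<Rightarrow> (nat \<rightharpoonup> itm) \<Rightarrow> nat set \<Rightarrow> ty \<Rightarrow> ty \<Rightarrow> bool" where
  "derivable_avoiding J \<xi> A \<rho> \<tau> \<longleftrightarrow>
     (\<exists>\<Phi> V \<xi>'. infer \<Phi> V \<rho> \<tau> \<and> \<xi> \<subseteq>\<^sub>m \<xi>' \<and> dom \<xi>' = V \<and> so_subst \<xi>' \<and> is_model J \<xi>' \<Phi>
              \<and> (V - (sov_t \<rho> \<union> sov_t \<tau>)) \<inter> A = {})"

lemma restrict_map_sov:
  assumes "so_subst \<xi>" "sov_t \<rho> \<union> sov_t \<tau> \<subseteq> dom \<xi>"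
  defines "\<xi>' \<equiv> \<xi> |` (sov_t \<rho> \<union> sov_t \<tau>)"
  shows "so_subst \<xi>'" "dom \<xi>' = sov_t \<rho> \<union> sov_t \<tau>"
    "subst_t \<xi>' \<rho> = subst_t \<xi> \<rho>" "subst_t \<xi>' \<tau> = subst_t \<xi> \<tau>"
  using assms by (auto simp: so_subst_restrict_map subst_t_restrict_map)

lemma derivable_avoiding_pair:
  assumes IH1: "\<And>A. finite A \<Longrightarrow> derivable_avoiding J (\<xi> |` (sov_t \<rho>1 \<union> sov_t \<tau>1)) A \<rho>1 \<tau>1"
    and IH2: "\<And>A. finite A \<Longrightarrow> derivable_avoiding J (\<xi> |` (sov_t \<rho>2 \<union> sov_t \<tau>2)) A \<rho>2 \<tau>2"
    and dom: "dom \<xi> = (sov_t \<rho>1 \<union> sov_t \<tau>1) \<union> (sov_t \<rho>2 \<union> sov_t \<tau>2)" and "finite A"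
  obtains \<Phi>1 V1 \<Phi>2 V2 \<xi>' where "infer \<Phi>1 V1 \<rho>1 \<tau>1" "infer \<Phi>2 V2 \<rho>2 \<tau>2"
    "V1 \<inter> V2 \<subseteq> (sov_t \<rho>1 \<union> sov_t \<tau>1) \<inter> (sov_t \<rho>2 \<union> sov_t \<tau>2)"
    "\<xi> \<subseteq>\<^sub>m \<xi>'" "dom \<xi>' = V1 \<union> V2" "so_subst \<xi>'" "is_model J \<xi>' (\<Phi>1 \<union> \<Phi>2)"
    "(V1 \<union> V2 - (sov_t \<rho>1 \<union> sov_t \<tau>1 \<union> (sov_t \<rho>2 \<union> sov_t \<tau>2))) \<inter> A = {}"
proof -
  define S1 where "S1 = sov_t \<rho>1 \<union> sov_t \<tau>1"
  define S2 where "S2 = sov_t \<rho>2 \<union> sov_t \<tau>2"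
  have "finite S2" by (simp add: S2_def finite_sov_t)
  then obtain \<Phi>1 V1 \<xi>1 where h1: "infer \<Phi>1 V1 \<rho>1 \<tau>1" "\<xi> |` S1 \<subseteq>\<^sub>m \<xi>1" "dom \<xi>1 = V1"
      "so_subst \<xi>1" "is_model J \<xi>1 \<Phi>1" "(V1 - S1) \<inter> (A \<union> S2) = {}"
    using IH1[of "A \<union> S2"] \<open>finite A\<close> unfolding derivable_avoiding_def S1_def by blast
  have "finite V1" using h1(1) by (rule infer_finite)
  then obtain \<Phi>2 V2 \<xi>2 where h2: "infer \<Phi>2 V2 \<rho>2 \<tau>2" "\<xi> |` S2 \<subseteq>\<^sub>m \<xi>2" "dom \<xi>2 = V2"
      "so_subst \<xi>2" "is_model J \<xi>2 \<Phi>2" "(V2 - S2) \<inter> (A \<union> V1) = {}"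
    using IH2[of "A \<union> V1"] \<open>finite A\<close> unfolding derivable_avoiding_def S2_def by blast
  have "S1 \<subseteq> V1" "S2 \<subseteq> V2"
    using map_le_implies_dom_le[OF h1(2)] map_le_implies_dom_le[OF h2(2)] h1(3) h2(3) dom
    unfolding S1_def S2_def by auto
  then have overlap: "V1 \<inter> V2 \<subseteq> S1 \<inter> S2" using h1(6) h2(6) by blast
  have dom': "dom \<xi> = S1 \<union> S2" using dom by (simp add: S1_def S2_def)
  note join = map_add_join[OF dom' h1(2) h2(2) overlap[folded h1(3) h2(3)]]
  show thesis
  proof (rule that[OF h1(1) h2(1) overlap[unfolded S1_def S2_def] join(1)])
    show "dom (\<xi>1 ++ \<xi>2) = V1 \<union> V2" using h1(3) h2(3) by auto
    show "so_subst (\<xi>1 ++ \<xi>2)" using h1(4) h2(4) by (rule so_subst_map_add)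
    show "is_model J (\<xi>1 ++ \<xi>2) (\<Phi>1 \<union> \<Phi>2)"
      using is_model_map_le[OF h1(5) join(2)] is_model_map_le[OF h2(5) map_le_map_add]
      by (simp add: is_model_Un)
    show "(V1 \<union> V2 - (sov_t \<rho>1 \<union> sov_t \<tau>1 \<union> (sov_t \<rho>2 \<union> sov_t \<tau>2))) \<inter> A = {}"
      using h1(6) h2(6) unfolding S1_def S2_def by blast
  qed
qed

lemma subst_inst_extend:
  assumes "so_subst \<xi>" "distinct as" "length as = length bs" "\<forall>b\<in>set bs. ground_i b"
    "set as \<inter> dom \<xi> = {}"
  defines "\<xi>' \<equiv> \<xi> ++ map_of (zip as bs)"
  shows "so_subst \<xi>'" "\<xi> \<subseteq>\<^sub>m \<xi>'" "dom \<xi>' = dom \<xi> \<union> set as"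
    "sov_t \<sigma> \<subseteq> dom \<xi> \<Longrightarrow> subst_t \<xi>' (inst \<sigma> (map IV is)) = inst (subst_t \<xi> \<sigma>) (map IV is)"
    "sov_t \<sigma> \<subseteq> dom \<xi> \<Longrightarrow> subst_t \<xi>' (inst \<sigma> (map SV as)) = inst (subst_t \<xi> \<sigma>) bs"
proof -
  show ss': "so_subst \<xi>'"
    unfolding \<xi>'_def using assms(1,4) by (intro so_subst_map_add so_subst_map_of_zip)
  have agree: "\<xi>' x = \<xi> x" if "x \<notin> set as" for x
    using that assms(3) by (simp add: \<xi>'_def map_add_dom_app_simps(3))
  show "\<xi> \<subseteq>\<^sub>m \<xi>'" using agree assms(5) unfolding map_le_def by (metis disjoint_iff)
  show "dom \<xi>' = dom \<xi> \<union> set as" using assms(3) by (auto simp: \<xi>'_def)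
  have "map (subst_i \<xi>') (map SV as) = bs"
  proof (rule nth_equalityI)
    fix k assume "k < length (map (subst_i \<xi>') (map SV as))"
    then have "\<xi>' (as ! k) = Some (bs ! k)"
      using assms(2,3) map_of_zip_nth[of as bs k] by (simp add: \<xi>'_def)
    with \<open>k < _\<close> show "map (subst_i \<xi>') (map SV as) ! k = bs ! k" by simp
  qed (simp add: assms(3))
  moreover assume "sov_t \<sigma> \<subseteq> dom \<xi>"
  then have "subst_t \<xi>' \<sigma> = subst_t \<xi> \<sigma>" using agree assms(5) by (intro subst_t_cong) blast
  ultimately show "subst_t \<xi>' (inst \<sigma> (map IV is)) = inst (subst_t \<xi> \<sigma>) (map IV is)"
    "subst_t \<xi>' (inst \<sigma> (map SV as)) = inst (subst_t \<xi> \<sigma>) bs"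
    by (simp_all add: subst_t_inst[OF ss'] del: map_map)
qed

lemma derivable_avoiding_all:
  assumes IH: "derivable_avoiding J \<xi>0 (A \<union> set as) (inst \<rho> (map IV is)) (inst \<tau> (map SV as))"
    and le0: "\<xi> \<subseteq>\<^sub>m \<xi>0" and dom: "dom \<xi> = sov_t \<rho> \<union> sov_t \<tau>"
    and ivars: "distinct is" "length is = nbind \<rho>"
      "set is \<inter> (fv_t (subst_t \<xi> \<rho>) \<union> fv_t (subst_t \<xi> \<tau>)) = {}"
    and as: "distinct as" "length as = nbind \<tau>" "set as \<inter> (sov_t \<rho> \<union> sov_t \<tau> \<union> A) = {}"
  shows "derivable_avoiding J \<xi> A \<rho> \<tau>"
proof -
  let ?S = "sov_t \<rho> \<union> sov_t \<tau>"
  let ?N = "{NotIn i \<alpha> | i \<alpha>. i \<in> set is \<and> \<alpha> \<in> ?S}"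
  obtain \<Phi> V \<xi>' where h: "infer \<Phi> V (inst \<rho> (map IV is)) (inst \<tau> (map SV as))"
      "\<xi>0 \<subseteq>\<^sub>m \<xi>'" "dom \<xi>' = V" "so_subst \<xi>'" "is_model J \<xi>' \<Phi>"
      "(V - (sov_t \<rho> \<union> sov_t (inst \<tau> (map SV as)))) \<inter> (A \<union> set as) = {}"
    using IH unfolding derivable_avoiding_def by auto
  have "fv_t \<rho> \<union> fv_t \<tau> \<subseteq> fv_t (subst_t \<xi> \<rho>) \<union> fv_t (subst_t \<xi> \<tau>)"
    by (auto simp: fv_subst_t)
  then have fresh_is: "set is \<inter> (fv_t \<rho> \<union> fv_t \<tau>) = {}" using ivars(3) by blast
  have fresh_as: "set as \<inter> ?S = {}" using as(3) by blast
  have "set as \<inter> V \<subseteq> sov_t (inst \<tau> (map SV as))" using h(6) as(3) by auto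
  from infer.inf_all[OF h(1) ivars(1) _ fresh_is as(1,2) fresh_as this] ivars(2)
  have infer: "infer (\<Phi> \<union> ?N) (V \<union> set as) \<rho> \<tau>" by simp
  have le: "\<xi> \<subseteq>\<^sub>m pad_zero (set as) \<xi>'"
    using le0 h(2) map_le_pad_zero by (blast intro: map_le_trans)
  have "is_model J (pad_zero (set as) \<xi>') ?N"
  proof (rule is_model_NotIn)
    show "?S \<subseteq> dom (pad_zero (set as) \<xi>')"
      using map_le_implies_dom_le[OF le] dom by simp
    fix \<alpha> assume "\<alpha> \<in> ?S"
    then have "pad_zero (set as) \<xi>' \<alpha> = \<xi> \<alpha>"
      "fv_i (the (\<xi> \<alpha>)) \<subseteq> fv_t (subst_t \<xi> \<rho>) \<union> fv_t (subst_t \<xi> \<tau>)"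
      using le dom unfolding map_le_def by (auto simp: fv_subst_t)
    then show "set is \<inter> fv_i (the (pad_zero (set as) \<xi>' \<alpha>)) = {}"
      using ivars(3) by auto
  qed
  moreover have "(V \<union> set as - ?S) \<inter> A = {}"
    using h(6) as(3) sov_inst_SV[of \<tau> as] by blast
  ultimately show ?thesis
    unfolding derivable_avoiding_def
    using infer le h(3,4) so_subst_pad_zero is_model_map_le[OF h(5) map_le_pad_zero]
    by (intro exI[of _ "\<Phi> \<union> ?N"] exI[of _ "V \<union> set as"] exI[of _ "pad_zero (set as) \<xi>'"])
      (auto simp: is_model_Un)
qed

lemma Base_eq_subst_t: "Base B a = subst_t \<xi> \<rho> \<longleftrightarrow> (\<exists>a'. \<rho> = Base B a' \<and> a = subst_i \<xi> a')"
  by (cases \<rho>) auto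

lemma Prod_eq_subst_t:
  "Prod r1 r2 = subst_t \<xi> \<rho> \<longleftrightarrow> (\<exists>\<rho>1 \<rho>2. \<rho> = Prod \<rho>1 \<rho>2 \<and> r1 = subst_t \<xi> \<rho>1 \<and> r2 = subst_t \<xi> \<rho>2)"
  by (cases \<rho>) auto

lemma Arr_eq_subst_t:
  "Arr r1 r2 = subst_t \<xi> \<rho> \<longleftrightarrow> (\<exists>\<rho>1 \<rho>2. \<rho> = Arr \<rho>1 \<rho>2 \<and> r1 = subst_t \<xi> \<rho>1 \<and> r2 = subst_t \<xi> \<rho>2)"
  by (cases \<rho>) auto

theorem infer_complete_avoiding:
  assumes "subty J (subst_t \<xi> \<rho>) (subst_t \<xi> \<tau>)" "so_subst \<xi>" "dom \<xi> = sov_t \<rho> \<union> sov_t \<tau>"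
    "finite A"
  shows "derivable_avoiding J \<xi> A \<rho> \<tau>"
  using assms
proof (induction "subst_t \<xi> \<rho>" "subst_t \<xi> \<tau>" arbitrary: \<xi> \<rho> \<tau> A rule: subty.induct)
  case (sub_base a b B)
  then obtain a' b' where ab: "\<rho> = Base B a'" "\<tau> = Base B b'" "a = subst_i \<xi> a'" "b = subst_i \<xi> b'"
    by (auto simp: Base_eq_subst_t)
  have "infer {Ineq a' b'} (sov_i a' \<union> sov_i b') \<rho> \<tau>"
    using ab by (simp add: infer.inf_base)
  moreover have "is_model J \<xi> {Ineq a' b'}"
    using sub_base ab by (auto simp: is_model_def)
  ultimately show ?case
    using sub_base.prems ab unfolding derivable_avoiding_def by (intro exI[of _ "{Ineq a' b'}"] exI[of _ "sov_i a' \<union> sov_i b'"] exI[of _ \<xi>]) auto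
next
  case (sub_prod r1 r3 r2 r4)
  then obtain \<rho>1 \<rho>2 \<tau>1 \<tau>2 where shape: "\<rho> = Prod \<rho>1 \<rho>2" "\<tau> = Prod \<tau>1 \<tau>2"
      "r1 = subst_t \<xi> \<rho>1" "r2 = subst_t \<xi> \<rho>2" "r3 = subst_t \<xi> \<tau>1" "r4 = subst_t \<xi> \<tau>2"
    by (auto simp: Prod_eq_subst_t)
  have dom: "dom \<xi> = (sov_t \<rho>1 \<union> sov_t \<tau>1) \<union> (sov_t \<rho>2 \<union> sov_t \<tau>2)"
    using sub_prod.prems shape by auto
  note restr1 = restrict_map_sov[OF sub_prod.prems(1), of \<rho>1 \<tau>1]
    and restr2 = restrict_map_sov[OF sub_prod.prems(1), of \<rho>2 \<tau>2]
  have "derivable_avoiding J (\<xi> |` (sov_t \<rho>1 \<union> sov_t \<tau>1)) A' \<rho>1 \<tau>1" if "finite A'" for A'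
    by (rule sub_prod.hyps(2)) (use restr1 dom shape that in auto)
  moreover have "derivable_avoiding J (\<xi> |` (sov_t \<rho>2 \<union> sov_t \<tau>2)) A' \<rho>2 \<tau>2" if "finite A'" for A'
    by (rule sub_prod.hyps(4)) (use restr2 dom shape that in auto)
  ultimately obtain \<Phi>1 V1 \<Phi>2 V2 \<xi>' where "infer \<Phi>1 V1 \<rho>1 \<tau>1" "infer \<Phi>2 V2 \<rho>2 \<tau>2"
    "V1 \<inter> V2 \<subseteq> (sov_t \<rho>1 \<union> sov_t \<tau>1) \<inter> (sov_t \<rho>2 \<union> sov_t \<tau>2)"
    "\<xi> \<subseteq>\<^sub>m \<xi>'" "dom \<xi>' = V1 \<union> V2" "so_subst \<xi>'" "is_model J \<xi>' (\<Phi>1 \<union> \<Phi>2)"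
    "(V1 \<union> V2 - (sov_t \<rho>1 \<union> sov_t \<tau>1 \<union> (sov_t \<rho>2 \<union> sov_t \<tau>2))) \<inter> A = {}"
    using derivable_avoiding_pair dom sub_prod.prems(3) by metis
  then show ?case
    unfolding derivable_avoiding_def shape
    by (intro exI[of _ "\<Phi>1 \<union> \<Phi>2"] exI[of _ "V1 \<union> V2"] exI[of _ \<xi>'])
      (auto intro: infer.inf_prod)
next
  case (sub_arr s2 s1 r1 r2)
  then obtain \<rho>1 \<rho>2 \<tau>1 \<tau>2 where shape: "\<rho> = Arr \<rho>1 \<rho>2" "\<tau> = Arr \<tau>1 \<tau>2"
      "s1 = subst_t \<xi> \<rho>1" "r1 = subst_t \<xi> \<rho>2" "s2 = subst_t \<xi> \<tau>1" "r2 = subst_t \<xi> \<tau>2"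
    by (auto simp: Arr_eq_subst_t)
  have dom: "dom \<xi> = (sov_t \<tau>1 \<union> sov_t \<rho>1) \<union> (sov_t \<rho>2 \<union> sov_t \<tau>2)"
    using sub_arr.prems shape by auto
  note restr1 = restrict_map_sov[OF sub_arr.prems(1), of \<tau>1 \<rho>1]
    and restr2 = restrict_map_sov[OF sub_arr.prems(1), of \<rho>2 \<tau>2]
  have "derivable_avoiding J (\<xi> |` (sov_t \<tau>1 \<union> sov_t \<rho>1)) A' \<tau>1 \<rho>1" if "finite A'" for A'
    by (rule sub_arr.hyps(2)) (use restr1 dom shape that in auto)
  moreover have "derivable_avoiding J (\<xi> |` (sov_t \<rho>2 \<union> sov_t \<tau>2)) A' \<rho>2 \<tau>2" if "finite A'" for A'
    by (rule sub_arr.hyps(4)) (use restr2 dom shape that in auto)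
  ultimately obtain \<Phi>1 V1 \<Phi>2 V2 \<xi>' where "infer \<Phi>1 V1 \<tau>1 \<rho>1" "infer \<Phi>2 V2 \<rho>2 \<tau>2"
    "V1 \<inter> V2 \<subseteq> (sov_t \<tau>1 \<union> sov_t \<rho>1) \<inter> (sov_t \<rho>2 \<union> sov_t \<tau>2)"
    "\<xi> \<subseteq>\<^sub>m \<xi>'" "dom \<xi>' = V1 \<union> V2" "so_subst \<xi>'" "is_model J \<xi>' (\<Phi>1 \<union> \<Phi>2)"
    "(V1 \<union> V2 - (sov_t \<tau>1 \<union> sov_t \<rho>1 \<union> (sov_t \<rho>2 \<union> sov_t \<tau>2))) \<inter> A = {}"
    using derivable_avoiding_pair dom sub_arr.prems(3) by metis
  then show ?case
    unfolding derivable_avoiding_def shape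
    by (intro exI[of _ "\<Phi>1 \<union> \<Phi>2"] exI[of _ "V1 \<union> V2"] exI[of _ \<xi>'])
      (auto intro: infer.inf_arr)
next
  case (sub_all "is" bs)
  let ?S = "sov_t \<rho> \<union> sov_t \<tau>"
  have "finite (?S \<union> A)" using sub_all.prems(3) by (simp add: finite_sov_t)
  then obtain as where as: "distinct as" "length as = nbind \<tau>" "set as \<inter> (?S \<union> A) = {}"
    by (rule obtain_fresh_list)
  have len: "length as = length bs" using as(2) sub_all.hyps(4) by simp
  have as_fresh: "set as \<inter> dom \<xi> = {}" using as(3) sub_all.prems(2) by blast
  define \<xi>b where "\<xi>b = \<xi> ++ map_of (zip as bs)"
  note ext = subst_inst_extend[OF sub_all.prems(1) as(1) len sub_all.hyps(5) as_fresh, folded \<xi>b_def]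
  define D where "D = sov_t (inst \<rho> (map IV is)) \<union> sov_t (inst \<tau> (map SV as))"
  have D: "?S \<subseteq> D" "D \<subseteq> ?S \<union> set as"
    unfolding D_def using sov_inst(1)[of \<tau>] sov_inst_SV[of \<tau> as] by auto
  \<comment> \<open>the induction hypothesis wants the domain to be exactly the variables of the premise types\<close>
  note restr = restrict_map_sov[OF ext(1), of "inst \<rho> (map IV is)" "inst \<tau> (map SV as)", folded D_def]
  have "derivable_avoiding J (\<xi>b |` D) (A \<union> set as) (inst \<rho> (map IV is)) (inst \<tau> (map SV as))"
  proof (rule sub_all.hyps(7))
    show "inst (subst_t \<xi> \<rho>) (map IV is) = subst_t (\<xi>b |` D) (inst \<rho> (map IV is))"
      using restr ext(3,4) D sub_all.prems(2) by auto
    show "inst (subst_t \<xi> \<tau>) bs = subst_t (\<xi>b |` D) (inst \<tau> (map SV as))"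
      using restr ext(3,5) D sub_all.prems(2) by auto
  qed (use restr ext(3) D sub_all.prems in \<open>auto simp: D_def\<close>)
  moreover have "\<xi> \<subseteq>\<^sub>m \<xi>b |` D"
    using ext(2) D(1) sub_all.prems(2) unfolding map_le_def by auto
  ultimately show ?case
    by (rule derivable_avoiding_all) (use sub_all.hyps(1-3) sub_all.prems(2) as in auto)
qed

theorem mainTheorem12:
  shows "(\<forall>\<Phi> V \<rho> \<tau> J \<xi>.
            infer \<Phi> V \<rho> \<tau> \<longrightarrow> is_type \<rho> \<longrightarrow> is_type \<tau> \<longrightarrow>
            is_interp J \<longrightarrow> so_subst \<xi> \<longrightarrow> is_model J \<xi> \<Phi> \<longrightarrow>
            subty J (subst_t \<xi> \<rho>) (subst_t \<xi> \<tau>))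
       \<and> (\<forall>\<rho> \<tau> J \<xi>.
            is_type \<rho> \<longrightarrow> is_type \<tau> \<longrightarrow> is_interp J \<longrightarrow> so_subst \<xi> \<longrightarrow>
            dom \<xi> = sov_t \<rho> \<union> sov_t \<tau> \<longrightarrow>
            subty J (subst_t \<xi> \<rho>) (subst_t \<xi> \<tau>) \<longrightarrow>
            (\<exists>\<Phi> V \<xi>'. infer \<Phi> V \<rho> \<tau> \<and> \<xi> \<subseteq>\<^sub>m \<xi>' \<and> dom \<xi>' = V \<and>
                       so_subst \<xi>' \<and> is_model J \<xi>' \<Phi>))"
proof (intro conjI allI impI)
  fix \<Phi> V \<rho> \<tau> J \<xi>
  assume "infer \<Phi> V \<rho> \<tau>" "so_subst \<xi>" "is_model J \<xi> \<Phi>"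
  then show "subty J (subst_t \<xi> \<rho>) (subst_t \<xi> \<tau>)" by (rule infer_sound)
next
  fix \<rho> \<tau> J \<xi>
  assume "so_subst \<xi>" "dom \<xi> = sov_t \<rho> \<union> sov_t \<tau>" "subty J (subst_t \<xi> \<rho>) (subst_t \<xi> \<tau>)"
  then have "derivable_avoiding J \<xi> {} \<rho> \<tau>" by (intro infer_complete_avoiding) simp_all
  then show "\<exists>\<Phi> V \<xi>'. infer \<Phi> V \<rho> \<tau> \<and> \<xi> \<subseteq>\<^sub>m \<xi>' \<and> dom \<xi>' = V \<and> so_subst \<xi>' \<and> is_model J \<xi>' \<Phi>"
    unfolding derivable_avoiding_def by auto
qed

end
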